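(* Let $A=KQ/I$ be a connected finite-dimensional quiver algebra of finite global dimension whose vertices are labelled $1,\dots,n$ so that the Cartan matrix $\phi_A$ is lower triangular. Let $\phi_A=\hat U_1 Q\hat U_2$ be a Bruhat decomposition of $\phi_A$. Then the Coxeter permutation $p_A$ of $A$ equals the row-permutation associated to the permutation matrix $Q$.
   Context: The Cartan matrix $\phi_A$ is the $n\times n$ integer matrix with entries $\phi_{i,j}=\dim_K e_jAe_i$ (the number of nonzero paths from $j$ to $i$ in a basis of paths). For finite global dimension, $\det\phi_A=\pm1$, and the Coxeter matrix is $C_A=-\phi_A^{T}\phi_A^{-1}$. A Bruhat decomposition of an invertible matrix $M$ (over $\mathbb{Q}$) is a factorisation $M=U_1PU_2$ with $U_1,U_2$ invertible upper triangular and $P$ a permutation matrix; $P$ is uniquely determined by $M$. For a permutation matrix $P$, the row-permutation $p_r$ is given by $p_r(i)=j$ if the nonzero entry of row $i$ of $P$ is in column $j$; the column-permutation $p_c$ is given by $p_c(i)=j$ if the nonzero entry of column $i$ is in row $j$. The Coxeter permutation $p_A$ is the column-permutation of the permutation matrix $P$ in a Bruhat decomposition $C_A=U_1PU_2$. *)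

theory Defs
  imports "Jordan_Normal_Form.Gauss_Jordan_Elimination" "Jordan_Normal_Form.Determinant"
begin

text \<open>A finite quiver has vertices 0..n-1 (the paper's 1..n, shifted by one), a finite
set of arrows of type 'a, and source/target maps.  A path is a pair (v, as): the starting
vertex v and the list of arrows in order of traversal; (v, []) is the trivial path e_v.\<close>

record 'a quiver =
  nverts :: nat
  arrows :: "'a set"
  src :: "'a \<Rightarrow> nat"
  tgt :: "'a \<Rightarrow> nat"

definition quiver :: "'a quiver \<Rightarrow> bool" where
  "quiver Q \<longleftrightarrow> finite (arrows Q) \<and>
     (\<forall>a\<in>arrows Q. src Q a < nverts Q \<and> tgt Q a < nverts Q)"

type_synonym 'a path = "nat \<times> 'a list"

fun valid_from :: "'a quiver \<Rightarrow> nat \<Rightarrow> 'a list \<Rightarrow> bool" where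
  "valid_from Q v [] \<longleftrightarrow> v < nverts Q"
| "valid_from Q v (a # as) \<longleftrightarrow> a \<in> arrows Q \<and> src Q a = v \<and> valid_from Q (tgt Q a) as"

definition valid_path :: "'a quiver \<Rightarrow> 'a path \<Rightarrow> bool" where
  "valid_path Q p \<longleftrightarrow> valid_from Q (fst p) (snd p)"

definition path_start :: "'a path \<Rightarrow> nat" where
  "path_start p = fst p"

definition path_end :: "'a quiver \<Rightarrow> 'a path \<Rightarrow> nat" where
  "path_end Q p = (if snd p = [] then fst p else tgt Q (last (snd p)))"

definition path_len :: "'a path \<Rightarrow> nat" where
  "path_len p = length (snd p)"

text \<open>Product of paths: p\<cdot>q is "first p, then q" when p ends where q starts, else 0.
With this convention e_j (KQ) e_i is spanned by the paths from j to i.\<close>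

definition composable :: "'a quiver \<Rightarrow> 'a path \<Rightarrow> 'a path \<Rightarrow> bool" where
  "composable Q p q \<longleftrightarrow> path_end Q p = path_start q"

definition path_cat :: "'a path \<Rightarrow> 'a path \<Rightarrow> 'a path" where
  "path_cat p q = (fst p, snd p @ snd q)"

text \<open>Elements of the path algebra KQ: finitely supported K-valued functions on valid paths
(coefficients with respect to the basis of paths).\<close>

definition supp :: "('b \<Rightarrow> 'k::zero) \<Rightarrow> 'b set" where
  "supp f = {p. f p \<noteq> 0}"

definition path_alg :: "'a quiver \<Rightarrow> ('a path \<Rightarrow> 'k::field) set" where
  "path_alg Q = {f. finite (supp f) \<and> (\<forall>p\<in>supp f. valid_path Q p)}"

definition pa_mult :: "'a quiver \<Rightarrow> ('a path \<Rightarrow> 'k::field) \<Rightarrow> ('a path \<Rightarrow> 'k) \<Rightarrow> ('a path \<Rightarrow> 'k)" where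
  "pa_mult Q f g = (\<lambda>r. \<Sum>p\<in>supp f. \<Sum>q\<in>supp g.
      (if composable Q p q \<and> path_cat p q = r then f p * g q else 0))"

definition pa_ideal :: "'a quiver \<Rightarrow> ('a path \<Rightarrow> 'k::field) set \<Rightarrow> bool" where
  "pa_ideal Q I \<longleftrightarrow> I \<subseteq> path_alg Q \<and> (\<lambda>_. 0) \<in> I \<and>
     (\<forall>f\<in>I. \<forall>g\<in>I. (\<lambda>p. f p + g p) \<in> I) \<and>
     (\<forall>f\<in>I. \<forall>g\<in>path_alg Q. pa_mult Q g f \<in> I \<and> pa_mult Q f g \<in> I)"

definition arrow_ideal_pow :: "'a quiver \<Rightarrow> nat \<Rightarrow> ('a path \<Rightarrow> 'k::field) set" where
  "arrow_ideal_pow Q k = {f \<in> path_alg Q. \<forall>p\<in>supp f. k \<le> path_len p}"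

definition admissible :: "'a quiver \<Rightarrow> ('a path \<Rightarrow> 'k::field) set \<Rightarrow> bool" where
  "admissible Q I \<longleftrightarrow> pa_ideal Q I \<and>
     (\<exists>m\<ge>2. arrow_ideal_pow Q m \<subseteq> I) \<and> I \<subseteq> arrow_ideal_pow Q 2"

definition connected_quiver :: "'a quiver \<Rightarrow> bool" where
  "connected_quiver Q \<longleftrightarrow> 0 < nverts Q \<and>
     (\<forall>i<nverts Q. \<forall>j<nverts Q.
        (i, j) \<in> ({(src Q a, tgt Q a) | a. a \<in> arrows Q} \<union>
                  {(tgt Q a, src Q a) | a. a \<in> arrows Q})\<^sup>*)"

text \<open>A set S of paths is linearly independent modulo I if no nontrivial K-linear
combination of its elements lies in I; i.e. the classes of S in A = KQ/I are linearly
independent.\<close>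

definition lin_indep_mod :: "'a quiver \<Rightarrow> ('a path \<Rightarrow> 'k::field) set \<Rightarrow> 'a path set \<Rightarrow> bool" where
  "lin_indep_mod Q I S \<longleftrightarrow>
     (\<forall>c :: 'a path \<Rightarrow> 'k. (\<lambda>p. if p \<in> S then c p else 0) \<in> I \<longrightarrow> (\<forall>p\<in>S. c p = 0))"

text \<open>dim_K e_j A e_i: since e_j A e_i is spanned by the classes of the paths from j to i,
its dimension is the maximal size of a finite set of such paths whose classes are
linearly independent (a basis of paths).\<close>

definition dim_eAe :: "'a quiver \<Rightarrow> ('a path \<Rightarrow> 'k::field) set \<Rightarrow> nat \<Rightarrow> nat \<Rightarrow> nat" where
  "dim_eAe Q I j i = Max {card S | S. finite S \<and>
       (\<forall>p\<in>S. valid_path Q p \<and> path_start p = j \<and> path_end Q p = i) \<and>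
       lin_indep_mod Q I S}"

definition cartan_mat :: "'a quiver \<Rightarrow> ('a path \<Rightarrow> 'k::field) set \<Rightarrow> int mat" where
  "cartan_mat Q I = mat (nverts Q) (nverts Q) (\<lambda>(i, j). int (dim_eAe Q I j i))"

definition lower_triangular :: "'b::zero mat \<Rightarrow> bool" where
  "lower_triangular M \<longleftrightarrow> (\<forall>i<dim_row M. \<forall>j<dim_col M. i < j \<longrightarrow> M $$ (i, j) = 0)"

definition coxeter_mat :: "'a quiver \<Rightarrow> ('a path \<Rightarrow> 'k::field) set \<Rightarrow> rat mat" where
  "coxeter_mat Q I = (let P = map_mat rat_of_int (cartan_mat Q I) in
      - (transpose_mat P * the (mat_inverse P)))"

definition permutation_mat :: "nat \<Rightarrow> 'b::{zero,one} mat \<Rightarrow> bool" where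
  "permutation_mat n P \<longleftrightarrow> P \<in> carrier_mat n n \<and>
     (\<exists>\<sigma>. \<sigma> permutes {..<n} \<and>
        (\<forall>i<n. \<forall>j<n. P $$ (i, j) = (if \<sigma> i = j then 1 else 0)))"

definition bruhat_decomp :: "nat \<Rightarrow> rat mat \<Rightarrow> rat mat \<Rightarrow> rat mat \<Rightarrow> rat mat \<Rightarrow> bool" where
  "bruhat_decomp n M U1 P U2 \<longleftrightarrow>
     U1 \<in> carrier_mat n n \<and> U2 \<in> carrier_mat n n \<and>
     invertible_mat U1 \<and> upper_triangular U1 \<and>
     invertible_mat U2 \<and> upper_triangular U2 \<and>
     permutation_mat n P \<and> M = U1 * P * U2"

definition row_perm :: "nat \<Rightarrow> 'b::zero mat \<Rightarrow> nat \<Rightarrow> nat" where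
  "row_perm n P i = (THE j. j < n \<and> P $$ (i, j) \<noteq> 0)"

definition col_perm :: "nat \<Rightarrow> 'b::zero mat \<Rightarrow> nat \<Rightarrow> nat" where
  "col_perm n P i = (THE j. j < n \<and> P $$ (j, i) \<noteq> 0)"

text \<open>Coxeter permutation: column permutation of the (unique) permutation matrix in a
Bruhat decomposition of C_A.\<close>

definition coxeter_perm :: "'a quiver \<Rightarrow> ('a path \<Rightarrow> 'k::field) set \<Rightarrow> nat \<Rightarrow> nat" where
  "coxeter_perm Q I = col_perm (nverts Q)
      (SOME P. \<exists>U1 U2. bruhat_decomp (nverts Q) (coxeter_mat Q I) U1 P U2)"

end

theory Submission
  imports Defs
begin

(* Inverting the Bruhat decomposition phi = U1 P U2 gives phi^-1 = U2^-1 P^T U1^-1.  As phi is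
   lower triangular, -phi^T is invertible upper triangular, so
   C = -phi^T phi^-1 = (-phi^T U2^-1) P^T U1^-1 is a Bruhat decomposition of the Coxeter matrix
   with permutation matrix P^T.  The permutation matrix of a Bruhat decomposition is unique, and
   the column permutation of P^T is the row permutation of P. *)

lemma index_mult_mat_sum:
  assumes "A \<in> carrier_mat nr n" "B \<in> carrier_mat n nc" "i < nr" "j < nc"
  shows "(A * B) $$ (i, j) = (\<Sum>k<n. A $$ (i, k) * B $$ (k, j))"
  using assms by (simp add: scalar_prod_def lessThan_atLeast0)

lemma invertible_matI:
  assumes "A \<in> carrier_mat n n" "B \<in> carrier_mat n n" "A * B = 1\<^sub>m n" "B * A = 1\<^sub>m n"
  shows "invertible_mat A"
  using assms unfolding invertible_mat_def inverts_mat_def by auto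

lemma invertible_matE:
  assumes "invertible_mat (A :: 'a :: semiring_1 mat)" "A \<in> carrier_mat n n"
  obtains B where "B \<in> carrier_mat n n" "A * B = 1\<^sub>m n" "B * A = 1\<^sub>m n"
proof -
  obtain B where AB: "A * B = 1\<^sub>m n" and BA: "B * A = 1\<^sub>m (dim_row B)"
    using assms unfolding invertible_mat_def inverts_mat_def by auto
  have "dim_col B = n"
    using arg_cong[OF AB, of dim_col] by simp
  moreover have "dim_row B = n"
    using arg_cong[OF BA, of dim_col] assms(2) by simp
  ultimately show thesis
    using that AB BA by auto
qed

lemma invertible_mat_iff_det:
  assumes "(A :: 'a :: field mat) \<in> carrier_mat n n"
  shows "invertible_mat A \<longleftrightarrow> det A \<noteq> 0"
proof
  assume "invertible_mat A"
  then obtain B where "B \<in> carrier_mat n n" "A * B = 1\<^sub>m n"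
    using assms by (rule invertible_matE)
  then have "det A * det B = 1"
    using det_mult[OF assms] by (metis det_one)
  then show "det A \<noteq> 0" by auto
next
  assume "det A \<noteq> 0"
  then have "A \<in> Units (ring_mat TYPE('a) n ())"
    by (rule det_non_zero_imp_unit[OF assms])
  then show "invertible_mat A"
    unfolding Units_def ring_mat_simps by (auto intro: invertible_matI)
qed

lemma invertible_mult_mat:
  fixes A B :: "'a :: field mat"
  assumes "A \<in> carrier_mat n n" "B \<in> carrier_mat n n" "invertible_mat A" "invertible_mat B"
  shows "invertible_mat (A * B)"
  using assms by (simp add: invertible_mat_iff_det[of _ n] det_mult[of _ n])

lemma invertible_transpose_mat:
  fixes A :: "'a :: field mat"
  assumes "A \<in> carrier_mat n n" "invertible_mat A"
  shows "invertible_mat (transpose_mat A)"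
  using assms by (simp add: invertible_mat_iff_det[of _ n] det_transpose)

lemma invertible_uminus_mat:
  fixes A :: "'a :: field mat"
  assumes "A \<in> carrier_mat n n" "invertible_mat A"
  shows "invertible_mat (- A)"
proof -
  have "- A = (- 1) \<cdot>\<^sub>m A"
    using assms(1) by (intro eq_matI) auto
  then show ?thesis
    using assms by (simp add: invertible_mat_iff_det[of _ n])
qed

lemma the_mat_inverse:
  fixes A B :: "'a :: field mat"
  assumes A: "A \<in> carrier_mat n n" and B: "B \<in> carrier_mat n n" and AB: "A * B = 1\<^sub>m n"
  shows "the (mat_inverse A) = B"
proof -
  have "det A * det B = 1"
    using det_mult[OF A B] AB by (metis det_one)
  then have "A \<in> Units (ring_mat TYPE('a) n ())"
    by (intro det_non_zero_imp_unit[OF A]) auto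
  then obtain X where X: "mat_inverse A = Some X"
    using mat_inverse(1)[OF A] by fastforce
  then have XA: "X * A = 1\<^sub>m n" and Xc: "X \<in> carrier_mat n n"
    using mat_inverse(2)[OF A] by auto
  have "X = X * (A * B)"
    using AB Xc by simp
  also have "\<dots> = B"
    using XA A B Xc by (simp add: assoc_mult_mat[symmetric, of _ n n _ n _ n])
  finally show ?thesis
    using X by simp
qed

lemma upper_triangular_mult:
  fixes A B :: "'a :: semiring_0 mat"
  assumes "A \<in> carrier_mat n n" "B \<in> carrier_mat n n" "upper_triangular A" "upper_triangular B"
  shows "upper_triangular (A * B)"
proof
  fix i j assume ji: "j < i" and i: "i < dim_row (A * B)"
  have i: "i < n"
    using i assms(1) by simp
  have "A $$ (i, k) * B $$ (k, j) = 0" if "k < n" for k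
  proof (cases "k < i")
    case True
    then show ?thesis using upper_triangularD[OF assms(3)] assms(1) i by simp
  next
    case False
    then show ?thesis using upper_triangularD[OF assms(4)] assms(2) ji that by simp
  qed
  then show "(A * B) $$ (i, j) = 0"
    using index_mult_mat_sum[OF assms(1,2) i] ji i by simp
qed

lemma upper_triangular_uminus:
  fixes A :: "'a :: group_add mat"
  assumes "A \<in> carrier_mat n n" "upper_triangular A"
  shows "upper_triangular (- A)"
  using assms upper_triangularD[OF assms(2)] by (intro upper_triangularI) auto

lemma upper_triangular_diag_nonzero:
  fixes A :: "'a :: field mat"
  assumes "A \<in> carrier_mat n n" "upper_triangular A" "det A \<noteq> 0" "i < n"
  shows "A $$ (i, i) \<noteq> 0"
  using assms det_upper_triangular[OF assms(2,1)]
  by (auto simp: diag_mat_def)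

lemma upper_triangular_inverse:
  fixes A B :: "'a :: field mat"
  assumes A: "A \<in> carrier_mat n n" "upper_triangular A"
    and B: "B \<in> carrier_mat n n" and AB: "A * B = 1\<^sub>m n"
  shows "upper_triangular B"
proof (rule ccontr)
  assume "\<not> upper_triangular B"
  then obtain j i0 where "j < i0" "i0 < n" "B $$ (i0, j) \<noteq> 0"
    using B unfolding upper_triangular_def by auto
  define S where "S = {i. j < i \<and> i < n \<and> B $$ (i, j) \<noteq> 0}"
  define i where "i = Max S"
  have "finite S" "S \<noteq> {}"
    unfolding S_def using \<open>j < i0\<close> \<open>i0 < n\<close> \<open>B $$ (i0, j) \<noteq> 0\<close> by auto
  then have i: "j < i" "i < n" "B $$ (i, j) \<noteq> 0" and below: "\<And>k. k \<in> S \<Longrightarrow> k \<le> i"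
    unfolding i_def using Max_in[of S] by (auto simp: S_def)
  have "det A \<noteq> 0"
    using det_mult[OF A(1) B] AB by (metis det_one mult_zero_left zero_neq_one)
  then have Aii: "A $$ (i, i) \<noteq> 0"
    using upper_triangular_diag_nonzero A i by blast
  \<comment> \<open>i is the lowest off-diagonal nonzero entry of column j, so only k = i contributes.\<close>
  have "A $$ (i, k) * B $$ (k, j) = 0" if "k < n" "k \<noteq> i" for k
  proof (cases "k < i")
    case True
    then show ?thesis using upper_triangularD[OF A(2)] A(1) i by simp
  next
    case False
    then show ?thesis using below[of k] i that by (auto simp: S_def)
  qed
  then have "(\<Sum>k\<in>{..<n} - {i}. A $$ (i, k) * B $$ (k, j)) = 0"
    by (intro sum.neutral) auto
  then have "(A * B) $$ (i, j) = A $$ (i, i) * B $$ (i, j)"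
    using index_mult_mat_sum[OF A(1) B i(2)] i by (simp add: sum.remove[of _ i])
  moreover have "(A * B) $$ (i, j) = 0"
    using AB i by simp
  ultimately show False
    using Aii i(3) by simp
qed

definition perm_mat :: "nat \<Rightarrow> (nat \<Rightarrow> nat) \<Rightarrow> 'a :: {zero, one} mat" where
  "perm_mat n \<sigma> = mat n n (\<lambda>(i, j). if \<sigma> i = j then 1 else 0)"

lemma perm_mat_carrier [simp]: "perm_mat n \<sigma> \<in> carrier_mat n n"
  and dim_row_perm_mat [simp]: "dim_row (perm_mat n \<sigma>) = n"
  and dim_col_perm_mat [simp]: "dim_col (perm_mat n \<sigma>) = n"
  by (simp_all add: perm_mat_def)

lemma permutation_matE:
  assumes "permutation_mat n P"
  obtains \<sigma> where "\<sigma> permutes {..<n}" "P = perm_mat n \<sigma>"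
proof -
  obtain \<sigma> where "\<sigma> permutes {..<n}" "P \<in> carrier_mat n n"
    and "\<forall>i<n. \<forall>j<n. P $$ (i, j) = (if \<sigma> i = j then 1 else 0)"
    using assms unfolding permutation_mat_def by blast
  moreover from this have "P = perm_mat n \<sigma>"
    unfolding perm_mat_def by (intro eq_matI) auto
  ultimately show thesis
    using that by blast
qed

lemma perm_mat_mult_index:
  fixes A :: "'a :: semiring_1 mat"
  assumes "\<sigma> permutes {..<n}" "A \<in> carrier_mat n nc" "i < n" "j < nc"
  shows "(perm_mat n \<sigma> * A) $$ (i, j) = A $$ (\<sigma> i, j)"
proof -
  have "(perm_mat n \<sigma> * A) $$ (i, j) = (\<Sum>k<n. perm_mat n \<sigma> $$ (i, k) * A $$ (k, j))"
    using assms(2-4) by (intro index_mult_mat_sum) auto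
  also have "\<dots> = (\<Sum>k<n. if \<sigma> i = k then A $$ (k, j) else 0)"
    using assms(3) by (intro sum.cong) (auto simp: perm_mat_def)
  also have "\<dots> = A $$ (\<sigma> i, j)"
    using permutes_in_image[OF assms(1), of i] assms(3) by simp
  finally show ?thesis .
qed

lemma mult_perm_mat_index:
  fixes A :: "'a :: semiring_1 mat"
  assumes "\<sigma> permutes {..<n}" "A \<in> carrier_mat nr n" "i < nr" "j < n"
  shows "(A * perm_mat n \<sigma>) $$ (i, \<sigma> j) = A $$ (i, j)"
proof -
  have "\<sigma> j < n"
    using permutes_in_image[OF assms(1), of j] assms(4) by simp
  then have "(A * perm_mat n \<sigma>) $$ (i, \<sigma> j) = (\<Sum>k<n. A $$ (i, k) * perm_mat n \<sigma> $$ (k, \<sigma> j))"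
    using assms(2,3) by (intro index_mult_mat_sum) auto
  also have "\<dots> = (\<Sum>k<n. if k = j then A $$ (i, k) else 0)"
    using \<open>\<sigma> j < n\<close> permutes_inj[OF assms(1)]
    by (intro sum.cong) (auto simp: perm_mat_def dest: injD)
  also have "\<dots> = A $$ (i, j)"
    using assms(4) by simp
  finally show ?thesis .
qed

lemma perm_mat_mult_transpose:
  fixes P :: "'a :: field mat"
  assumes "permutation_mat n P"
  shows "P * transpose_mat P = 1\<^sub>m n" "transpose_mat P * P = 1\<^sub>m n"
proof -
  obtain \<sigma> where \<sigma>: "\<sigma> permutes {..<n}" and P: "P = perm_mat n \<sigma>"
    using assms by (rule permutation_matE)
  have "(P * transpose_mat P) $$ (i, j) = 1\<^sub>m n $$ (i, j)" if "i < n" "j < n" for i j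
  proof -
    have "\<sigma> i < n"
      using permutes_in_image[OF \<sigma>, of i] that by simp
    moreover have "\<sigma> j = \<sigma> i \<longleftrightarrow> j = i"
      using permutes_inj[OF \<sigma>] by (auto dest: injD)
    moreover have "(P * transpose_mat P) $$ (i, j) = transpose_mat P $$ (\<sigma> i, j)"
      unfolding P by (rule perm_mat_mult_index[OF \<sigma> _ that]) simp
    ultimately show ?thesis
      using that by (simp add: P perm_mat_def)
  qed
  then show PPT: "P * transpose_mat P = 1\<^sub>m n"
    by (intro eq_matI) (simp_all add: P perm_mat_def)
  show "transpose_mat P * P = 1\<^sub>m n"
    by (rule mat_mult_left_right_inverse[OF _ _ PPT]) (auto simp: P)
qed

lemma permutation_mat_transpose:
  assumes "permutation_mat n P"
  shows "permutation_mat n (transpose_mat P)"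
proof -
  obtain \<sigma> where \<sigma>: "\<sigma> permutes {..<n}" and P: "P = perm_mat n \<sigma>"
    using assms by (rule permutation_matE)
  have "transpose_mat P = perm_mat n (Hilbert_Choice.inv \<sigma>)"
    unfolding P perm_mat_def using permutes_inv_eq[OF \<sigma>] by (intro eq_matI) auto
  then show ?thesis
    unfolding permutation_mat_def perm_mat_def using permutes_inv[OF \<sigma>] by auto
qed

lemma permutation_mat_invertible:
  fixes P :: "'a :: field mat"
  assumes "permutation_mat n P"
  shows "invertible_mat P"
  using assms perm_mat_mult_transpose[OF assms]
  by (intro invertible_matI[of _ n "transpose_mat P"]) (auto simp: permutation_mat_def)

lemma mult_mat_cancel_left:
  fixes A B C :: "'a :: semiring_1 mat"
  assumes "A * B = 1\<^sub>m n" "A \<in> carrier_mat n n" "B \<in> carrier_mat n n" "C \<in> carrier_mat n m"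
  shows "A * (B * C) = C"
  using assms by (simp add: assoc_mult_mat[symmetric, of A n n B n C m])

lemma invertible_upper_triangularE:
  fixes A :: "'a :: field mat"
  assumes "A \<in> carrier_mat n n" "invertible_mat A" "upper_triangular A"
  obtains B where "B \<in> carrier_mat n n" "A * B = 1\<^sub>m n" "B * A = 1\<^sub>m n"
    "invertible_mat B" "upper_triangular B"
proof -
  obtain B where B: "B \<in> carrier_mat n n" "A * B = 1\<^sub>m n" "B * A = 1\<^sub>m n"
    using assms(2,1) by (rule invertible_matE)
  then show thesis
    using that invertible_matI[OF B(1) assms(1) B(3,2)] upper_triangular_inverse[OF assms(1,3) B(1,2)]
    by blast
qed

lemma bruhat_decomp_invertible:
  assumes "bruhat_decomp n M U1 P U2"
  shows "invertible_mat M"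
  using assms permutation_mat_invertible[of n P]
  unfolding bruhat_decomp_def permutation_mat_def
  by (metis invertible_mult_mat mult_carrier_mat)

(* W P_sigma = P_tau W' with W, W' upper triangular and W invertible: the nonzero diagonal entry
   W(i, i) reappears in W' at position (tau i, sigma i). *)
lemma bruhat_decomp_perm_le:
  assumes a: "bruhat_decomp n M A1 (perm_mat n \<sigma>) A2" and b: "bruhat_decomp n M B1 (perm_mat n \<tau>) B2"
    and \<sigma>: "\<sigma> permutes {..<n}" and \<tau>: "\<tau> permutes {..<n}" and i: "i < n"
  shows "\<tau> i \<le> \<sigma> i"
proof -
  have A: "A1 \<in> carrier_mat n n" "A2 \<in> carrier_mat n n" "invertible_mat A1" "upper_triangular A1"
    "invertible_mat A2" "upper_triangular A2" "M = A1 * perm_mat n \<sigma> * A2"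
    using a unfolding bruhat_decomp_def by blast+
  have B: "B1 \<in> carrier_mat n n" "B2 \<in> carrier_mat n n" "invertible_mat B1" "upper_triangular B1"
    "invertible_mat B2" "upper_triangular B2" "M = B1 * perm_mat n \<tau> * B2"
    using b unfolding bruhat_decomp_def by blast+
  obtain B1' where B1': "B1' \<in> carrier_mat n n" "B1' * B1 = 1\<^sub>m n" "invertible_mat B1'" "upper_triangular B1'"
    using invertible_upper_triangularE[OF B(1,3,4)] by metis
  obtain A2' where A2': "A2' \<in> carrier_mat n n" "A2 * A2' = 1\<^sub>m n" "invertible_mat A2'" "upper_triangular A2'"
    using invertible_upper_triangularE[OF A(2,5,6)] by metis
  define W where "W = B1' * A1"
  define W' where "W' = B2 * A2'"
  have W: "W \<in> carrier_mat n n" "upper_triangular W" "det W \<noteq> 0"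
    unfolding W_def using A B1'
    by (auto intro: upper_triangular_mult simp: det_mult[of _ n] invertible_mat_iff_det[of _ n])
  have W': "W' \<in> carrier_mat n n" "upper_triangular W'"
    unfolding W'_def using A2' B upper_triangular_mult by auto
  have "W * perm_mat n \<sigma> = perm_mat n \<tau> * W'"
  proof -
    have "W * perm_mat n \<sigma> = B1' * M * A2'"
      unfolding W_def A(7) using A A2' B1'
      by (simp add: mult_carrier_mat[of _ n n _ n] assoc_mult_mat[of _ n n _ n _ n])
    also have "\<dots> = perm_mat n \<tau> * W'"
      unfolding W'_def B(7) using B A2' B1'
      by (simp add: mult_carrier_mat[of _ n n _ n] assoc_mult_mat[of _ n n _ n _ n]
          mult_mat_cancel_left[OF B1'(2,1) B(1), where m = n])
    finally show ?thesis .
  qed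
  moreover have "\<sigma> i < n"
    using permutes_in_image[OF \<sigma>, of i] i by simp
  ultimately have "W' $$ (\<tau> i, \<sigma> i) = W $$ (i, i)"
    using mult_perm_mat_index[OF \<sigma> W(1) i i] perm_mat_mult_index[OF \<tau> W'(1) i] by simp
  moreover have "W $$ (i, i) \<noteq> 0"
    using upper_triangular_diag_nonzero[OF W i] .
  moreover have "\<tau> i < n"
    using permutes_in_image[OF \<tau>, of i] i by simp
  ultimately show ?thesis
    using upper_triangularD[OF W'(2), of "\<sigma> i" "\<tau> i"] W'(1) by force
qed

lemma bruhat_decomp_perm_unique:
  assumes "bruhat_decomp n M U1 P U2" "bruhat_decomp n M V1 P' V2"
  shows "P = P'"
proof -
  obtain \<sigma> where \<sigma>: "\<sigma> permutes {..<n}" and P: "P = perm_mat n \<sigma>"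
    using assms(1) unfolding bruhat_decomp_def by (auto elim: permutation_matE)
  obtain \<tau> where \<tau>: "\<tau> permutes {..<n}" and P': "P' = perm_mat n \<tau>"
    using assms(2) unfolding bruhat_decomp_def by (auto elim: permutation_matE)
  have "\<sigma> i = \<tau> i" if "i < n" for i
    using bruhat_decomp_perm_le[OF assms(1,2)[unfolded P P'] \<sigma> \<tau> that]
      bruhat_decomp_perm_le[OF assms(2,1)[unfolded P P'] \<tau> \<sigma> that] by simp
  then show ?thesis
    unfolding P P' perm_mat_def by (intro eq_matI) auto
qed

lemma bruhat_decomp_inverse:
  assumes "bruhat_decomp n M U1 P U2"
  shows "\<exists>V1 V2. bruhat_decomp n (the (mat_inverse M)) V1 (transpose_mat P) V2"
proof -
  have U: "U1 \<in> carrier_mat n n" "U2 \<in> carrier_mat n n" "invertible_mat U1" "upper_triangular U1"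
    "invertible_mat U2" "upper_triangular U2" "permutation_mat n P" "M = U1 * P * U2"
    using assms unfolding bruhat_decomp_def by blast+
  have P: "P \<in> carrier_mat n n" "P * transpose_mat P = 1\<^sub>m n"
    using U(7) perm_mat_mult_transpose(1)[OF U(7)] unfolding permutation_mat_def by auto
  obtain U1' where U1': "U1' \<in> carrier_mat n n" "U1 * U1' = 1\<^sub>m n" "invertible_mat U1'" "upper_triangular U1'"
    using invertible_upper_triangularE[OF U(1,3,4)] by metis
  obtain U2' where U2': "U2' \<in> carrier_mat n n" "U2 * U2' = 1\<^sub>m n" "invertible_mat U2'" "upper_triangular U2'"
    using invertible_upper_triangularE[OF U(2,5,6)] by metis
  have "M * (U2' * transpose_mat P * U1') = 1\<^sub>m n"
    unfolding U(8) using U P U1' U2'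
    by (simp add: mult_carrier_mat[of _ n n _ n] assoc_mult_mat[of _ n n _ n _ n]
        mult_mat_cancel_left[OF U2'(2) U(2) U2'(1), where m = n]
        mult_mat_cancel_left[OF P(2) P(1), where m = n])
  then have "the (mat_inverse M) = U2' * transpose_mat P * U1'"
    using U P U1' U2' by (intro the_mat_inverse) auto
  then have "bruhat_decomp n (the (mat_inverse M)) U2' (transpose_mat P) U1'"
    unfolding bruhat_decomp_def using U2' U1' permutation_mat_transpose[OF U(7)] by auto
  then show ?thesis by blast
qed

lemma bruhat_decomp_mult_left:
  assumes "bruhat_decomp n M U1 P U2"
    and U: "U \<in> carrier_mat n n" "invertible_mat U" "upper_triangular U"
  shows "bruhat_decomp n (U * M) (U * U1) P U2"
proof -
  have U1: "U1 \<in> carrier_mat n n" "invertible_mat U1" "upper_triangular U1"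
    and P: "P \<in> carrier_mat n n" and U2: "U2 \<in> carrier_mat n n" and M: "M = U1 * P * U2"
    using assms(1) unfolding bruhat_decomp_def permutation_mat_def by blast+
  have "U * M = U * U1 * P * U2"
    unfolding M using U(1) U1(1) P U2 by (simp add: assoc_mult_mat[of _ n n _ n _ n])
  moreover have "invertible_mat (U * U1)" "upper_triangular (U * U1)"
    using U U1 by (auto intro: invertible_mult_mat upper_triangular_mult)
  ultimately show ?thesis
    using assms(1) U(1) U1(1) unfolding bruhat_decomp_def by auto
qed

lemma bruhat_decomp_coxeter_transform:
  assumes "bruhat_decomp n M U1 P U2" and "upper_triangular (transpose_mat M)"
  shows "\<exists>V1 V2. bruhat_decomp n (- (transpose_mat M * the (mat_inverse M))) V1 (transpose_mat P) V2"
proof -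
  obtain V1 V2 where V: "bruhat_decomp n (the (mat_inverse M)) V1 (transpose_mat P) V2"
    using bruhat_decomp_inverse[OF assms(1)] by blast
  have "M \<in> carrier_mat n n"
    using assms(1) unfolding bruhat_decomp_def permutation_mat_def by auto
  moreover have "invertible_mat M"
    using assms(1) by (rule bruhat_decomp_invertible)
  ultimately have N: "- transpose_mat M \<in> carrier_mat n n" "invertible_mat (- transpose_mat M)"
    "upper_triangular (- transpose_mat M)"
    using assms(2) by (auto intro!: invertible_uminus_mat invertible_transpose_mat upper_triangular_uminus)
  have "the (mat_inverse M) \<in> carrier_mat n n"
    using V unfolding bruhat_decomp_def permutation_mat_def by auto
  then have "- transpose_mat M * the (mat_inverse M) = - (transpose_mat M * the (mat_inverse M))"
    using \<open>M \<in> carrier_mat n n\<close> by (intro uminus_mult_left_mat) auto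
  then show ?thesis
    using bruhat_decomp_mult_left[OF V N] by auto
qed

lemma coxeter_perm_eq_col_perm:
  assumes "bruhat_decomp (nverts Q) (coxeter_mat Q I) V1 P V2"
  shows "coxeter_perm Q I = col_perm (nverts Q) P"
proof -
  let ?P = "SOME P. \<exists>U1 U2. bruhat_decomp (nverts Q) (coxeter_mat Q I) U1 P U2"
  have "\<exists>U1 U2. bruhat_decomp (nverts Q) (coxeter_mat Q I) U1 ?P U2"
    by (rule someI_ex) (use assms in blast)
  then obtain U1 U2 where "bruhat_decomp (nverts Q) (coxeter_mat Q I) U1 ?P U2"
    by blast
  then have "?P = P"
    using assms by (rule bruhat_decomp_perm_unique)
  then show ?thesis
    unfolding coxeter_perm_def by simp
qed

lemma col_perm_transpose:
  assumes "P \<in> carrier_mat n n" "i < n"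
  shows "col_perm n (transpose_mat P) i = row_perm n P i"
proof -
  have "transpose_mat P $$ (j, i) = P $$ (i, j)" if "j < n" for j
    using assms that by auto
  then show ?thesis
    unfolding col_perm_def row_perm_def by (metis (no_types, lifting))
qed

theorem mainTheorem3:
  fixes Q :: "'a quiver" and I :: "('a path \<Rightarrow> 'k::field) set"
    and U1 P U2 :: "rat mat"
  assumes "quiver Q"
    and "connected_quiver Q"
    and "admissible Q I"
    and "det (cartan_mat Q I) = 1 \<or> det (cartan_mat Q I) = -1"
    and "lower_triangular (cartan_mat Q I)"
    and "bruhat_decomp (nverts Q) (map_mat rat_of_int (cartan_mat Q I)) U1 P U2"
  shows "\<forall>i < nverts Q. coxeter_perm Q I i = row_perm (nverts Q) P i"
proof -
  let ?n = "nverts Q" and ?M = "map_mat rat_of_int (cartan_mat Q I)"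
  have "upper_triangular (transpose_mat ?M)"
    using assms(5) unfolding lower_triangular_def cartan_mat_def by auto
  then obtain V1 V2 where "bruhat_decomp ?n (coxeter_mat Q I) V1 (transpose_mat P) V2"
    using bruhat_decomp_coxeter_transform[OF assms(6)] unfolding coxeter_mat_def Let_def by blast
  then have "coxeter_perm Q I = col_perm ?n (transpose_mat P)"
    by (rule coxeter_perm_eq_col_perm)
  moreover have "P \<in> carrier_mat ?n ?n"
    using assms(6) unfolding bruhat_decomp_def permutation_mat_def by blast
  ultimately show ?thesis
    using col_perm_transpose by auto
qed

end
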